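(* Let $R$ be an abelian Rickart $*$-ring and $a,b\in R$ with $a\perp b$. Then, in the natural partial order, $a\wedge b=0$ and $a\vee b=a+b$.
   Context: A Rickart $*$-ring is a $*$-ring in which the right annihilator of every element is generated, as a right ideal, by a projection ($e=e^2=e^*$); it has unity. Abelian: all idempotents central. Natural partial order: $a\leq b$ iff there is $x\in R$ with $a=xa=xb=ax^*=bx^*$. Orthogonality: $a\perp b$ iff there is $x\in R$ with $xa=a=ax^*$ and $xb=0=bx^*$. *)

theory Defs
  imports Main
begin

definition star_ring :: "('a::ring_1 \<Rightarrow> 'a) \<Rightarrow> bool" where
  "star_ring st \<longleftrightarrow>
     (\<forall>x y. st (x + y) = st x + st y) \<and>
     (\<forall>x y. st (x * y) = st y * st x) \<and>
     (\<forall>x. st (st x) = x)"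

definition projection :: "('a::ring_1 \<Rightarrow> 'a) \<Rightarrow> 'a \<Rightarrow> bool" where
  "projection st e \<longleftrightarrow> e * e = e \<and> st e = e"

definition rickart_star_ring :: "('a::ring_1 \<Rightarrow> 'a) \<Rightarrow> bool" where
  "rickart_star_ring st \<longleftrightarrow> star_ring st \<and>
     (\<forall>x. \<exists>e. projection st e \<and> {y. x * y = 0} = {e * r | r. True})"

definition abelian_ring :: "'a::ring_1 itself \<Rightarrow> bool" where
  "abelian_ring _ \<longleftrightarrow> (\<forall>e::'a. e * e = e \<longrightarrow> (\<forall>r. e * r = r * e))"

definition npo :: "('a::ring_1 \<Rightarrow> 'a) \<Rightarrow> 'a \<Rightarrow> 'a \<Rightarrow> bool" where
  "npo st a b \<longleftrightarrow> (\<exists>x. a = x * a \<and> x * a = x * b \<and> x * b = a * st x \<and> a * st x = b * st x)"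

definition orth :: "('a::ring_1 \<Rightarrow> 'a) \<Rightarrow> 'a \<Rightarrow> 'a \<Rightarrow> bool" where
  "orth st a b \<longleftrightarrow> (\<exists>x. x * a = a \<and> a = a * st x \<and> x * b = 0 \<and> b * st x = 0)"

definition is_meet :: "('a \<Rightarrow> 'a \<Rightarrow> bool) \<Rightarrow> 'a \<Rightarrow> 'a \<Rightarrow> 'a \<Rightarrow> bool" where
  "is_meet le a b m \<longleftrightarrow> le m a \<and> le m b \<and> (\<forall>c. le c a \<and> le c b \<longrightarrow> le c m)"

definition is_join :: "('a \<Rightarrow> 'a \<Rightarrow> bool) \<Rightarrow> 'a \<Rightarrow> 'a \<Rightarrow> 'a \<Rightarrow> bool" where
  "is_join le a b j \<longleftrightarrow> le a j \<and> le b j \<and> (\<forall>c. le a c \<and> le b c \<longrightarrow> le j c)"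

end

theory Submission
  imports Defs
begin

text \<open>
  Orthogonality gives \<open>x\<close> with \<open>x a = a\<close> and \<open>x b = 0\<close>. A common lower bound \<open>c\<close> of \<open>a\<close> and
  \<open>b\<close> is a right multiple of each, so \<open>x c = c\<close> and \<open>x c = 0\<close>, whence \<open>c = 0\<close>.
  For the join, the Rickart projection \<open>p\<close> generating the right annihilator of \<open>x\<close> is central,
  kills \<open>a\<close> and fixes \<open>b\<close>. Cutting witnesses of \<open>a \<le> c\<close> and \<open>b \<le> c\<close> down by \<open>1 - p\<close> and
  \<open>p\<close> respectively makes them act on disjoint pieces, and their sum witnesses \<open>a + b \<le> c\<close>.
\<close>

definition npo_witness :: "('a::ring_1 \<Rightarrow> 'a) \<Rightarrow> 'a \<Rightarrow> 'a \<Rightarrow> 'a \<Rightarrow> bool" where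
  "npo_witness st x a b \<longleftrightarrow> x * a = a \<and> x * b = a \<and> a * st x = a \<and> b * st x = a"

definition central_projection :: "('a::ring_1 \<Rightarrow> 'a) \<Rightarrow> 'a \<Rightarrow> bool" where
  "central_projection st p \<longleftrightarrow> projection st p \<and> (\<forall>r. p * r = r * p)"

lemma central_projectionD:
  assumes "central_projection st p"
  shows "p * p = p" and "st p = p" and "p * r = r * p"
  using assms unfolding central_projection_def projection_def by blast+

lemma npo_iff_witness: "npo st a b \<longleftrightarrow> (\<exists>x. npo_witness st x a b)"
  unfolding npo_def npo_witness_def
  by (intro ex_cong1 iffI; elim conjE) (simp_all only: eq_commute)

lemma npo_imp_eq_right_mult:
  assumes "npo st c a"
  obtains y where "c = a * st y"
  using assms unfolding npo_iff_witness npo_witness_def by metis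

context
  fixes st :: "'a::ring_1 \<Rightarrow> 'a"
  assumes star: "star_ring st"
begin

lemma star_add: "st (u + v) = st u + st v"
  and star_mult: "st (u * v) = st v * st u"
  and star_star: "st (st u) = u"
  using star unfolding star_ring_def by blast+

lemma star_zero: "st 0 = 0"
  using star_add[of 0 0] by simp

lemma star_diff: "st (u - v) = st u - st v"
proof -
  have "st (- v) + st v = 0" using star_add[of "- v" v] by (simp add: star_zero)
  then have "st (- v) = - st v" by (simp add: eq_neg_iff_add_eq_0)
  then show ?thesis using star_add[of u "- v"] by simp
qed

lemma star_one: "st 1 = 1"
proof -
  have "st 1 = st 1 * st (st 1)" by (simp add: star_star)
  also have "\<dots> = st (st 1 * 1)" by (simp only: star_mult)
  finally show ?thesis by (simp add: star_star)
qed

lemma npo_zero_least: "npo st 0 a"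
  unfolding npo_iff_witness npo_witness_def by (intro exI[of _ 0]) (simp add: star_zero)

lemma central_projection_complement:
  assumes "central_projection st p"
  shows "central_projection st (1 - p)"
proof -
  note pp = central_projectionD(1)[OF assms] and sp = central_projectionD(2)[OF assms]
    and pr = central_projectionD(3)[OF assms]
  have "(1 - p) * (1 - p) = 1 - p" using pp by (simp add: algebra_simps)
  moreover have "st (1 - p) = 1 - p" by (simp add: star_diff star_one sp)
  moreover have "(1 - p) * r = r * (1 - p)" for r using pr[of r] by (simp add: algebra_simps)
  ultimately show ?thesis unfolding central_projection_def projection_def by blast
qed

lemma npo_witness_mult_central_projection:
  assumes q: "central_projection st q" and qa: "q * a = a" and y: "npo_witness st y a c"
  shows "npo_witness st (q * y) a c"
proof -
  note sq = central_projectionD(2)[OF q] and qr = central_projectionD(3)[OF q]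
  have ya: "y * a = a" "y * c = a" "a * st y = a" "c * st y = a"
    using y unfolding npo_witness_def by simp_all
  have "q * y * a = a" "q * y * c = a" using ya qa by (simp_all add: mult.assoc)
  moreover have "a * st (q * y) = a" "c * st (q * y) = a"
    using ya qa qr[of a] by (simp_all add: star_mult sq mult.assoc[symmetric])
  ultimately show ?thesis unfolding npo_witness_def by simp
qed

lemma central_projection_kills_orthogonal:
  assumes q: "central_projection st q" and qq': "q * q' = 0" and q'b: "q' * b = b"
  shows "q * y * b = 0" and "b * st (q * y) = 0"
proof -
  note sq = central_projectionD(2)[OF q] and qr = central_projectionD(3)[OF q]
  have "q * y * b = y * q * (q' * b)" using q'b qr[of y] by simp
  also have "\<dots> = y * (q * q') * b" by (simp add: mult.assoc)
  finally show "q * y * b = 0" using qq' by simp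
  have "b * st (q * y) = (q' * b) * st y * q" by (simp add: star_mult sq mult.assoc q'b)
  also have "\<dots> = q' * q * (b * st y)" using qr[of "b * st y"] by (simp add: mult.assoc)
  also have "q' * q = 0" using qq' qr[of q'] by simp
  finally show "b * st (q * y) = 0" by simp
qed

lemma npo_witness_add:
  assumes "npo_witness st y a c" and "npo_witness st z b c"
    and "y * b = 0" and "z * a = 0" and "b * st y = 0" and "a * st z = 0"
  shows "npo_witness st (y + z) (a + b) c"
  using assms unfolding npo_witness_def by (simp add: star_add algebra_simps)

lemma npo_add_if_separated:
  assumes p: "central_projection st p" and pa: "p * a = 0" and pb: "p * b = b"
    and ac: "npo st a c" and bc: "npo st b c"
  shows "npo st (a + b) c"
proof -
  obtain y z where y: "npo_witness st y a c" and z: "npo_witness st z b c"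
    using ac bc unfolding npo_iff_witness by blast
  have p': "central_projection st (1 - p)"
    using p by (rule central_projection_complement)
  note pp = central_projectionD(1)[OF p]
  have p'a: "(1 - p) * a = a" and p'p: "(1 - p) * p = 0" and pp': "p * (1 - p) = 0"
    using pa pp by (simp_all add: algebra_simps)
  have "npo_witness st ((1 - p) * y + p * z) (a + b) c"
  proof (rule npo_witness_add)
    show "npo_witness st ((1 - p) * y) a c"
      using p' p'a y by (rule npo_witness_mult_central_projection)
    show "npo_witness st (p * z) b c"
      using p pb z by (rule npo_witness_mult_central_projection)
    show "(1 - p) * y * b = 0" "b * st ((1 - p) * y) = 0"
      using central_projection_kills_orthogonal[OF p' p'p pb] by auto
    show "p * z * a = 0" "a * st (p * z) = 0"
      using central_projection_kills_orthogonal[OF p pp' p'a] by auto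
  qed
  then show ?thesis unfolding npo_iff_witness by blast
qed

lemma orth_meet_zero:
  assumes "orth st a b"
  shows "is_meet (npo st) a b 0"
  unfolding is_meet_def
proof (intro conjI allI impI npo_zero_least)
  obtain x where xa: "x * a = a" and xb: "x * b = 0"
    using assms unfolding orth_def by blast
  fix c assume "npo st c a \<and> npo st c b"
  then obtain y z where ca: "c = a * st y" and cb: "c = b * st z"
    by (metis npo_imp_eq_right_mult)
  have "x * c = c" unfolding ca using xa by (simp add: mult.assoc[symmetric])
  moreover have "x * c = 0" unfolding cb using xb by (simp add: mult.assoc[symmetric])
  ultimately show "npo st c 0" using npo_zero_least by simp
qed

lemma orth_le_add:
  assumes "orth st a b"
  shows "npo st a (a + b)" and "npo st b (a + b)"
proof -
  obtain x where "x * a = a" "a = a * st x" "x * b = 0" "b * st x = 0"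
    using assms unfolding orth_def by blast
  note x = this(1) this(2)[symmetric] this(3,4)
  have "npo_witness st x a (a + b)"
    unfolding npo_witness_def by (simp add: x distrib_left distrib_right)
  then show "npo st a (a + b)" unfolding npo_iff_witness by blast
  have "npo_witness st (1 - x) b (a + b)"
    unfolding npo_witness_def by (simp add: x star_diff star_one algebra_simps)
  then show "npo st b (a + b)" unfolding npo_iff_witness by blast
qed

end

lemma abelian_rickart_orth_separated:
  assumes rick: "rickart_star_ring st" and ab: "abelian_ring TYPE('a::ring_1)"
    and orth: "orth st a (b::'a)"
  obtains p where "central_projection st p" "p * a = 0" "p * b = b"
proof -
  obtain x where xa: "x * a = a" and xb: "x * b = 0"
    using orth unfolding orth_def by blast
  obtain p where p: "projection st p" and ann: "{y. x * y = 0} = {p * r | r. True}"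
    using rick unfolding rickart_star_ring_def by blast
  have pp: "p * p = p" using p unfolding projection_def by simp
  then have pr: "\<And>r. p * r = r * p" using ab unfolding abelian_ring_def by blast
  have "p \<in> {p * r | r. True}" by (intro CollectI exI[of _ 1]) simp
  then have "x * p = 0" by (simp only: ann[symmetric] mem_Collect_eq)
  have "p * a = p * x * a" using xa by (simp add: mult.assoc)
  also have "\<dots> = x * p * a" using pr[of x] by simp
  finally have pa: "p * a = 0" using \<open>x * p = 0\<close> by simp
  have "b \<in> {p * r | r. True}" using xb by (simp only: ann[symmetric] mem_Collect_eq)
  then obtain r where "b = p * r" by blast
  then have pb: "p * b = b" using pp by (simp add: mult.assoc[symmetric])
  have "central_projection st p"
    unfolding central_projection_def using p pr by blast
  then show thesis using pa pb by (rule that)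
qed

theorem mainTheorem9:
  fixes st :: "'a::ring_1 \<Rightarrow> 'a" and a b :: 'a
  assumes "rickart_star_ring st"
    and "abelian_ring TYPE('a)"
    and "orth st a b"
  shows "is_meet (npo st) a b 0 \<and> is_join (npo st) a b (a + b)"
proof -
  have star: "star_ring st" using assms(1) unfolding rickart_star_ring_def by blast
  obtain p where p: "central_projection st p" "p * a = 0" "p * b = b"
    using abelian_rickart_orth_separated assms .
  have "npo st (a + b) c" if "npo st a c" "npo st b c" for c
    using npo_add_if_separated[OF star p that] .
  with orth_meet_zero[OF star assms(3)] orth_le_add[OF star assms(3)] show ?thesis
    unfolding is_join_def by blast
qed

end
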